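(* Let $A=A_n\ge2$ be an integer, $\Delta>0$, $a,b\in\mathbb R$, $\sigma>0$, and for $1\le i\le n$ let $X_i=i\Delta$, $Y_i=aX_i+b+e_i$ with $e_1,\dots,e_n$ i.i.d. $\mathcal N(0,\sigma^2)$. Let $\hat a(k,A)$ be the least-squares slope $$\hat a(k,A)=\frac{A\sum_{j=k+1}^{k+A}X_jY_j-\sum_{j=k+1}^{k+A}X_j\sum_{j=k+1}^{k+A}Y_j}{A\sum_{j=k+1}^{k+A}X_j^2-\big(\sum_{j=k+1}^{k+A}X_j\big)^2},$$ $D_3(k,A)=\hat a(k,A)-\hat a(k-A,A)$ for $A\le k\le n-A$, and $D_3^{\mathrm{Std}}(k,A)=D_3(k,A)/\sqrt{\mathrm{Var}[D_3(k,A)]}$. Then for $A\le k_1,k_2\le n-A$, with $p=|k_2-k_1|$, $$\mathrm{Cov}\big(D_3^{\mathrm{Std}}(k_1,A),D_3^{\mathrm{Std}}(k_2,A)\big)=\frac{6}{A(A^2-1)}\times\begin{cases}f_1(p,A)&\text{if }0\le p<A,\\ f_2(p,A)&\text{if }A\le p\le 2A-1,\\ 0&\text{if }p>2A-1,\end{cases}$$ where $$f_1(p,A)=\tfrac16(A-p)(A^2-2Ap-2p^2-1)+\tfrac1{12}p(3A^2+2p^2-6Ap+1),$$ $$f_2(p,A)=-\tfrac1{12}(2A-p)(A^2+2Ap-2p^2-1).$$ *)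

theory Defs
  imports "HOL-Probability.Probability"
begin

definition cov :: "'a measure \<Rightarrow> ('a \<Rightarrow> real) \<Rightarrow> ('a \<Rightarrow> real) \<Rightarrow> real" where
  "cov M U V = (LINT w|M. (U w - (LINT x|M. U x)) * (V w - (LINT x|M. V x)))"

definition var :: "'a measure \<Rightarrow> ('a \<Rightarrow> real) \<Rightarrow> real" where
  "var M U = (LINT w|M. (U w - (LINT x|M. U x))\<^sup>2)"

definition ls_slope :: "(nat \<Rightarrow> real) \<Rightarrow> (nat \<Rightarrow> real) \<Rightarrow> nat \<Rightarrow> nat \<Rightarrow> real" where
  "ls_slope X Y k A =
     (real A * (\<Sum>j=k+1..k+A. X j * Y j) - (\<Sum>j=k+1..k+A. X j) * (\<Sum>j=k+1..k+A. Y j)) /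
     (real A * (\<Sum>j=k+1..k+A. (X j)\<^sup>2) - (\<Sum>j=k+1..k+A. X j)\<^sup>2)"

definition D3 :: "(nat \<Rightarrow> real) \<Rightarrow> (nat \<Rightarrow> real) \<Rightarrow> nat \<Rightarrow> nat \<Rightarrow> real" where
  "D3 X Y k A = ls_slope X Y k A - ls_slope X Y (k - A) A"

definition D3_std :: "'a measure \<Rightarrow> (nat \<Rightarrow> real) \<Rightarrow> ('a \<Rightarrow> nat \<Rightarrow> real) \<Rightarrow> nat \<Rightarrow> nat \<Rightarrow> 'a \<Rightarrow> real" where
  "D3_std M X Y k A w = D3 X (Y w) k A / sqrt (var M (\<lambda>v. D3 X (Y v) k A))"

definition f1 :: "real \<Rightarrow> real \<Rightarrow> real" where
  "f1 p A = (1/6) * (A - p) * (A\<^sup>2 - 2*A*p - 2*p\<^sup>2 - 1) + (1/12) * p * (3*A\<^sup>2 + 2*p\<^sup>2 - 6*A*p + 1)"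

definition f2 :: "real \<Rightarrow> real \<Rightarrow> real" where
  "f2 p A = - (1/12) * (2*A - p) * (A\<^sup>2 + 2*A*p - 2*p\<^sup>2 - 1)"

end

theory Submission
  imports Defs
begin

(* On a window of A equally spaced design points the least-squares slope is a plus a linear
   form in the noise whose weights are proportional to the centred positions w(t) = t - (A+1)/2.
   So D_3(k,A) is a linear form in the noise with weight vector w(. - k) - w(. - k + A), and for
   i.i.d. centred noise the correlation of two linear forms is the normalised inner product of
   their weight vectors.  With R(d) = sum_t w(t) w(t + d), which equals
   (A - d)(A^2 - 2Ad - 2d^2 - 1)/12 for d <= A and vanishes beyond, that inner product is
   2R(p) - R(p + A) - R(|p - A|), which is f1 resp. f2. *)

(* w on 1..A, extended by 0.  As w 0 = 0, truncated subtraction makes slope_weight A (j - k)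
   the weight of observation j in the window k+1..k+A and 0 outside it. *)
definition slope_weight :: "nat \<Rightarrow> nat \<Rightarrow> real" where
  "slope_weight A t = (if 1 \<le> t \<and> t \<le> A then real t - (real A + 1) / 2 else 0)"

definition slope_autocorr :: "nat \<Rightarrow> nat \<Rightarrow> real" where
  "slope_autocorr A d = (\<Sum>t=1..A. slope_weight A t * slope_weight A (t + d))"

lemma sum_lessThan_shifted_products:
  "(\<Sum>i<L. (x + real i) * (y + real i)) =
     real L * x * y + (x + y) * real L * (real L - 1) / 2 + (real L - 1) * real L * (2 * real L - 1) / 6"
  by (induct L) (simp_all add: field_simps power2_eq_square)

lemma slope_autocorr_eq:
  assumes "d \<le> A"
  shows "slope_autocorr A d =
    (real A - real d) * ((real A)\<^sup>2 - 2 * real A * real d - 2 * (real d)\<^sup>2 - 1) / 12"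
proof -
  define m where "m = (real A + 1) / 2"
  have "slope_autocorr A d = (\<Sum>t=1..A - d. slope_weight A t * slope_weight A (t + d))"
    unfolding slope_autocorr_def by (rule sum.mono_neutral_right) (auto simp: slope_weight_def)
  also have "\<dots> = (\<Sum>i<A - d. (1 - m + real i) * (1 + real d - m + real i))"
    unfolding One_nat_def sum.atLeast1_atMost_eq
    by (rule sum.cong) (auto simp: slope_weight_def m_def algebra_simps)
  finally show ?thesis
    using assms unfolding sum_lessThan_shifted_products m_def
    by (simp add: of_nat_diff field_simps power2_eq_square)
qed

lemma slope_autocorr_eq_0: "A \<le> d \<Longrightarrow> slope_autocorr A d = 0"
  by (auto simp: slope_autocorr_def slope_weight_def intro!: sum.neutral)

lemma sum_slope_weight: "(\<Sum>t=1..A. slope_weight A t) = 0"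
proof -
  have "(\<Sum>t=1..A. slope_weight A t) = (\<Sum>t=1..A. real t) - real A * (real A + 1) / 2"
    by (simp add: slope_weight_def sum_subtractf)
  then show ?thesis
    using double_gauss_sum_from_Suc_0[of A, where 'a = real] by simp
qed

lemma sum_slope_weight_mult_of_nat:
  "(\<Sum>t=1..A. slope_weight A t * real t) = real A * ((real A)\<^sup>2 - 1) / 12"
proof -
  have "(\<Sum>t=1..A. slope_weight A t * real t) =
      (\<Sum>t=1..A. slope_weight A t * slope_weight A t + (real A + 1) / 2 * slope_weight A t)"
    by (rule sum.cong) (auto simp: slope_weight_def algebra_simps)
  also have "\<dots> = slope_autocorr A 0 + (real A + 1) / 2 * (\<Sum>t=1..A. slope_weight A t)"
    by (simp add: sum.distrib slope_autocorr_def sum_distrib_left)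
  also have "\<dots> = slope_autocorr A 0"
    using sum_slope_weight[of A] by simp
  finally show ?thesis
    by (simp add: slope_autocorr_eq)
qed

lemma sum_slope_weight_window:
  assumes "k + A \<le> n"
  shows "(\<Sum>j\<in>{1..n}. slope_weight A (j - k) * F j) = (\<Sum>t=1..A. slope_weight A t * F (t + k))"
proof -
  have "(\<Sum>j\<in>{1..n}. slope_weight A (j - k) * F j) = (\<Sum>j=1+k..A+k. slope_weight A (j - k) * F j)"
    by (rule sum.mono_neutral_right) (use assms in \<open>auto simp: slope_weight_def\<close>)
  then show ?thesis
    by (simp only: sum.shift_bounds_cl_nat_ivl) simp
qed

lemma sum_slope_weight_products:
  assumes "max s t + A \<le> n"
  shows "(\<Sum>j\<in>{1..n}. slope_weight A (j - s) * slope_weight A (j - t)) =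
    slope_autocorr A (max s t - min s t)"
proof -
  have ordered: "(\<Sum>j\<in>{1..n}. slope_weight A (j - t) * slope_weight A (j - s)) =
      slope_autocorr A (s - t)" if "t \<le> s" "s + A \<le> n" for s t
  proof -
    have "(\<Sum>j\<in>{1..n}. slope_weight A (j - s) * slope_weight A (j - t)) =
        (\<Sum>u=1..A. slope_weight A u * slope_weight A (u + (s - t)))"
      using sum_slope_weight_window[OF \<open>s + A \<le> n\<close>] \<open>t \<le> s\<close> by (simp add: add.assoc)
    then show ?thesis
      by (simp add: slope_autocorr_def mult.commute)
  qed
  show ?thesis
    using assms ordered[of s t] ordered[of t s] by (cases "s \<le> t") (auto simp: mult.commute)
qed

lemma sum_arithmetic_window:
  "(\<Sum>t=1..A. real (t + k) * \<Delta> * F t) =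
     \<Delta> * (\<Sum>t=1..A. slope_weight A t * F t) + \<Delta> * (real k + (real A + 1) / 2) * (\<Sum>t=1..A. F t)"
proof -
  have "(\<Sum>t=1..A. real (t + k) * \<Delta> * F t) =
      (\<Sum>t=1..A. \<Delta> * (slope_weight A t * F t) + \<Delta> * (real k + (real A + 1) / 2) * F t)"
    by (rule sum.cong) (auto simp: slope_weight_def algebra_simps)
  then show ?thesis
    by (simp add: sum.distrib sum_distrib_left)
qed

lemma ls_slope_arithmetic_grid:
  assumes "A \<ge> 2" "\<Delta> \<noteq> 0"
  shows "ls_slope (\<lambda>i. real i * \<Delta>) Y k A =
    12 / (\<Delta> * real A * ((real A)\<^sup>2 - 1)) * (\<Sum>t=1..A. slope_weight A t * Y (t + k))"
proof -
  have window: "(\<Sum>j=k+1..k+A. F j) = (\<Sum>t=1..A. F (t + k))" for F :: "nat \<Rightarrow> real"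
    using sum.shift_bounds_cl_nat_ivl[of F 1 k A] by (simp add: add.commute)
  define c where "c = real k + (real A + 1) / 2"
  have sum_grid: "(\<Sum>t=1..A. real (t + k) * \<Delta>) = \<Delta> * c * real A"
    using sum_arithmetic_window[where F="\<lambda>_. 1" and A=A and k=k and \<Delta>=\<Delta>] sum_slope_weight[of A]
    by (simp add: c_def)
  have cross: "real A * (\<Sum>t=1..A. real (t + k) * \<Delta> * F t) -
      (\<Sum>t=1..A. real (t + k) * \<Delta>) * (\<Sum>t=1..A. F t) =
      real A * \<Delta> * (\<Sum>t=1..A. slope_weight A t * F t)" for F :: "nat \<Rightarrow> real"
    unfolding sum_grid sum_arithmetic_window c_def[symmetric] by (simp add: algebra_simps)
  have "(\<Sum>t=1..A. slope_weight A t * (real (t + k) * \<Delta>)) =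
      \<Delta> * (\<Sum>t=1..A. slope_weight A t * real t) + \<Delta> * real k * (\<Sum>t=1..A. slope_weight A t)"
    unfolding sum_distrib_left sum.distrib[symmetric] by (rule sum.cong) (simp_all add: algebra_simps)
  also have "\<dots> = \<Delta> * real A * ((real A)\<^sup>2 - 1) / 12"
    unfolding sum_slope_weight_mult_of_nat sum_slope_weight by simp
  finally have weighted: "(\<Sum>t=1..A. slope_weight A t * (real (t + k) * \<Delta>)) = \<Delta> * real A * ((real A)\<^sup>2 - 1) / 12" .
  have denominator: "real A * (\<Sum>t=1..A. (real (t + k) * \<Delta>)\<^sup>2) - (\<Sum>t=1..A. real (t + k) * \<Delta>)\<^sup>2
      = real A * \<Delta> * (\<Delta> * real A * ((real A)\<^sup>2 - 1) / 12)"
    using cross[of "\<lambda>t. real (t + k) * \<Delta>"] unfolding weighted by (simp only: power2_eq_square)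
  have "real A \<ge> 2"
    using assms by simp
  then have "(real A)\<^sup>2 - 1 \<noteq> 0" "real A \<noteq> 0"
    using mult_mono[of 2 "real A" 2 "real A"] by (auto simp: power2_eq_square)
  then show ?thesis
    using assms unfolding ls_slope_def window cross denominator
    by (simp add: field_simps)
qed

definition D3_weight :: "nat \<Rightarrow> nat \<Rightarrow> nat \<Rightarrow> real" where
  "D3_weight A k j = slope_weight A (j - k) - slope_weight A (j - (k - A))"

lemma D3_arithmetic_grid:
  assumes "A \<ge> 2" "\<Delta> \<noteq> 0" "A \<le> k" "k + A \<le> n"
  shows "D3 (\<lambda>i. real i * \<Delta>) (\<lambda>i. a * (real i * \<Delta>) + b + E i) k A =
    12 / (\<Delta> * real A * ((real A)\<^sup>2 - 1)) * (\<Sum>j\<in>{1..n}. D3_weight A k j * E j)"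
proof -
  have "(\<Sum>t=1..A. slope_weight A t * (a * (real (t + k) * \<Delta>) + b + E (t + k))) -
      (\<Sum>t=1..A. slope_weight A t * (a * (real (t + (k - A)) * \<Delta>) + b + E (t + (k - A)))) =
      (\<Sum>t=1..A. slope_weight A t * (E (t + k) - E (t + (k - A))) + a * \<Delta> * real A * slope_weight A t)"
    unfolding sum_subtractf[symmetric] using assms
    by (intro sum.cong) (simp_all add: algebra_simps of_nat_diff)
  (* the trend is shifted by a * A * Delta between the two windows and is killed by sum w = 0 *)
  also have "\<dots> = (\<Sum>t=1..A. slope_weight A t * (E (t + k) - E (t + (k - A))))"
    using sum_slope_weight[of A] by (simp add: sum.distrib sum_distrib_left[symmetric])
  also have "\<dots> = (\<Sum>j\<in>{1..n}. D3_weight A k j * E j)"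
    using sum_slope_weight_window[of k A n E] sum_slope_weight_window[of "k - A" A n E] assms
    by (simp add: D3_weight_def left_diff_distrib right_diff_distrib sum_subtractf)
  finally show ?thesis
    by (simp only: D3_def ls_slope_arithmetic_grid[OF assms(1,2)] right_diff_distrib[symmetric])
qed

lemma slope_autocorr_combination:
  "2 * slope_autocorr A q - slope_autocorr A (q + A) - slope_autocorr A (if q \<le> A then A - q else q - A) =
    (if real q < real A then f1 (real q) (real A)
     else if real q \<le> 2 * real A - 1 then f2 (real q) (real A) else 0)"
proof -
  consider "q < A" | "A \<le> q" "q < 2 * A" | "2 * A \<le> q" by linarith
  then show ?thesis
  proof cases
    case 1
    then show ?thesis
      by (simp add: slope_autocorr_eq slope_autocorr_eq_0 of_nat_diff f1_def field_simps power2_eq_square)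
  next
    case 2
    then have "real q \<le> 2 * real A - 1" by linarith
    with 2 show ?thesis
      by (simp add: slope_autocorr_eq slope_autocorr_eq_0 of_nat_diff f2_def field_simps power2_eq_square)
  next
    case 3
    then show ?thesis by (simp add: slope_autocorr_eq_0)
  qed
qed

lemma sum_D3_weight_products_le:
  assumes "A \<le> k1" "k1 \<le> k2" "k2 + A \<le> n"
  shows "(\<Sum>j\<in>{1..n}. D3_weight A k1 j * D3_weight A k2 j) =
    (if real (k2 - k1) < real A then f1 (real (k2 - k1)) (real A)
     else if real (k2 - k1) \<le> 2 * real A - 1 then f2 (real (k2 - k1)) (real A) else 0)"
proof -
  define C where "C s t = (\<Sum>j\<in>{1..n}. slope_weight A (j - s) * slope_weight A (j - t))" for s t
  have "(\<Sum>j\<in>{1..n}. D3_weight A k1 j * D3_weight A k2 j) =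
      C k1 k2 - C k1 (k2 - A) - C (k1 - A) k2 + C (k1 - A) (k2 - A)"
    unfolding C_def D3_weight_def by (simp add: algebra_simps sum.distrib sum_subtractf)
  also have "\<dots> = 2 * slope_autocorr A (k2 - k1) - slope_autocorr A (k2 - k1 + A)
      - slope_autocorr A (if k2 - k1 \<le> A then A - (k2 - k1) else k2 - k1 - A)"
  proof -
    have C_eq: "C s t = slope_autocorr A (max s t - min s t)" if "max s t + A \<le> n" for s t
      unfolding C_def using sum_slope_weight_products[OF that] .
    have "C k1 k2 = slope_autocorr A (k2 - k1)" "C (k1 - A) (k2 - A) = slope_autocorr A (k2 - k1)"
      "C (k1 - A) k2 = slope_autocorr A (k2 - k1 + A)"
      "C k1 (k2 - A) = slope_autocorr A (if k2 - k1 \<le> A then A - (k2 - k1) else k2 - k1 - A)"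
      using assms by (simp_all add: C_eq max_def min_def) (auto intro: arg_cong[where f = "slope_autocorr A"])
    then show ?thesis by simp
  qed
  finally show ?thesis
    unfolding slope_autocorr_combination .
qed

lemma sum_D3_weight_products:
  assumes "A \<le> k1" "A \<le> k2" "k1 + A \<le> n" "k2 + A \<le> n"
  shows "(\<Sum>j\<in>{1..n}. D3_weight A k1 j * D3_weight A k2 j) =
    (if \<bar>real k2 - real k1\<bar> < real A then f1 \<bar>real k2 - real k1\<bar> (real A)
     else if \<bar>real k2 - real k1\<bar> \<le> 2 * real A - 1 then f2 \<bar>real k2 - real k1\<bar> (real A) else 0)"
proof (cases "k1 \<le> k2")
  case True
  then show ?thesis
    using sum_D3_weight_products_le[of A k1 k2 n] assms by (simp add: of_nat_diff)
next
  case False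
  then show ?thesis
    using sum_D3_weight_products_le[of A k2 k1 n] assms by (simp add: of_nat_diff mult.commute)
qed

lemma cov_mult: "cov M (\<lambda>w. \<alpha> * U w) (\<lambda>w. \<beta> * V w) = \<alpha> * \<beta> * cov M U V"
proof -
  have "(\<lambda>w. (\<alpha> * U w - \<alpha> * (LINT x|M. U x)) * (\<beta> * V w - \<beta> * (LINT x|M. V x))) =
      (\<lambda>w. \<alpha> * \<beta> * ((U w - (LINT x|M. U x)) * (V w - (LINT x|M. V x))))"
    by (simp add: fun_eq_iff algebra_simps)
  then show ?thesis
    unfolding cov_def by simp
qed

lemma var_eq_cov: "var M U = cov M U U"
  unfolding var_def cov_def power2_eq_square ..

lemma cov_standardized:
  "cov M (\<lambda>w. U w / sqrt (var M U)) (\<lambda>w. V w / sqrt (var M V)) =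
    cov M U V / sqrt (var M U * var M V)"
  using cov_mult[of M "1 / sqrt (var M U)" U "1 / sqrt (var M V)" V] by (simp add: real_sqrt_mult)

context prob_space
begin

lemma normal_distributed_moments:
  assumes "\<sigma> > 0" and D: "distributed M lborel X (normal_density 0 \<sigma>)"
  shows "integrable M X" "integrable M (\<lambda>x. X x * X x)"
    "expectation X = 0" "expectation (\<lambda>x. X x * X x) = \<sigma>\<^sup>2"
proof -
  show "integrable M X"
    using distributed_integrable[OF D, of "\<lambda>x. x"] integrable_normal_moment_nz_1[OF \<open>\<sigma> > 0\<close>, of 0]
    by simp
  show "integrable M (\<lambda>x. X x * X x)"
    using distributed_integrable[OF D, of "\<lambda>x. x * x"] integrable_normal_moment[OF \<open>\<sigma> > 0\<close>, of 0 2]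
    by (simp add: power2_eq_square)
  show "expectation X = 0"
    using normal_distributed_expectation[OF assms] .
  then show "expectation (\<lambda>x. X x * X x) = \<sigma>\<^sup>2"
    using normal_distributed_variance[OF assms] by (simp add: power2_eq_square)
qed

lemma indep_normal_products:
  assumes indep: "indep_vars (\<lambda>_. borel) e I"
    and normal: "\<And>i. i \<in> I \<Longrightarrow> distributed M lborel (e i) (normal_density 0 \<sigma>)"
    and "\<sigma> > 0" "i \<in> I" "j \<in> I"
  shows "integrable M (\<lambda>w. e i w * e j w)"
    "expectation (\<lambda>w. e i w * e j w) = (if i = j then \<sigma>\<^sup>2 else 0)"
proof -
  note moments = normal_distributed_moments[OF \<open>\<sigma> > 0\<close> normal]
  have "integrable M (\<lambda>w. e i w * e j w) \<and> expectation (\<lambda>w. e i w * e j w) = (if i = j then \<sigma>\<^sup>2 else 0)"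
  proof (cases "i = j")
    case True
    then show ?thesis using moments(2,4) \<open>i \<in> I\<close> by simp
  next
    case False
    have indep_pair: "indep_vars (\<lambda>_. borel) e {i, j}"
      by (rule indep_vars_subset[OF indep]) (use assms in auto)
    have integrable: "\<And>k. k \<in> {i, j} \<Longrightarrow> integrable M (e k)"
      using moments(1) assms by auto
    have pair: "(\<lambda>w. \<Prod>k\<in>{i, j}. e k w) = (\<lambda>w. e i w * e j w)"
      using False by auto
    show ?thesis
      using indep_vars_integrable[OF _ indep_pair integrable] indep_vars_lebesgue_integral[OF _ indep_pair integrable]
        moments(3) assms False
      unfolding pair by simp
  qed
  then show "integrable M (\<lambda>w. e i w * e j w)"
    "expectation (\<lambda>w. e i w * e j w) = (if i = j then \<sigma>\<^sup>2 else 0)" by auto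
qed

lemma cov_linear_combinations:
  assumes "finite I"
    and "\<And>i. i \<in> I \<Longrightarrow> integrable M (e i)" "\<And>i. i \<in> I \<Longrightarrow> expectation (e i) = 0"
    and "\<And>i j. i \<in> I \<Longrightarrow> j \<in> I \<Longrightarrow> integrable M (\<lambda>w. e i w * e j w)"
    and "\<And>i j. i \<in> I \<Longrightarrow> j \<in> I \<Longrightarrow> expectation (\<lambda>w. e i w * e j w) = (if i = j then v else 0)"
  shows "cov M (\<lambda>w. \<Sum>j\<in>I. c j * e j w) (\<lambda>w. \<Sum>j\<in>I. d j * e j w) = v * (\<Sum>j\<in>I. c j * d j)"
proof -
  have centred: "expectation (\<lambda>w. \<Sum>j\<in>I. f j * e j w) = 0" for f
    using assms(2,3) by (subst Bochner_Integration.integral_sum) auto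
  have "(\<lambda>w. (\<Sum>j\<in>I. c j * e j w) * (\<Sum>j\<in>I. d j * e j w)) =
      (\<lambda>w. \<Sum>i\<in>I. \<Sum>j\<in>I. c i * d j * (e i w * e j w))"
    by (simp add: sum_product algebra_simps)
  then have "cov M (\<lambda>w. \<Sum>j\<in>I. c j * e j w) (\<lambda>w. \<Sum>j\<in>I. d j * e j w) =
      (\<Sum>i\<in>I. \<Sum>j\<in>I. c i * d j * expectation (\<lambda>w. e i w * e j w))"
    unfolding cov_def centred using assms(4)
    by (simp add: Bochner_Integration.integral_sum)
  also have "\<dots> = (\<Sum>i\<in>I. \<Sum>j\<in>I. c i * d j * (if i = j then v else 0))"
    using assms(5) by (intro sum.cong refl) auto
  also have "\<dots> = v * (\<Sum>j\<in>I. c j * d j)"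
    using assms(1) by (simp add: sum_distrib_left algebra_simps if_distrib cong: if_cong)
  finally show ?thesis .
qed


lemma cov_D3_arithmetic_grid:
  assumes "indep_vars (\<lambda>_. borel) e {1..n}"
    and "\<And>i. i \<in> {1..n} \<Longrightarrow> distributed M lborel (e i) (normal_density 0 \<sigma>)"
    and "\<sigma> > 0" "A \<ge> 2" "\<Delta> \<noteq> 0" "A \<le> k" "k + A \<le> n" "A \<le> k'" "k' + A \<le> n"
  shows "cov M (\<lambda>w. D3 (\<lambda>i. real i * \<Delta>) (\<lambda>i. a * (real i * \<Delta>) + b + e i w) k A)
      (\<lambda>w. D3 (\<lambda>i. real i * \<Delta>) (\<lambda>i. a * (real i * \<Delta>) + b + e i w) k' A) =
    (12 / (\<Delta> * real A * ((real A)\<^sup>2 - 1)))\<^sup>2 * \<sigma>\<^sup>2 *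
      (\<Sum>j\<in>{1..n}. D3_weight A k j * D3_weight A k' j)"
proof -
  define K where "K = 12 / (\<Delta> * real A * ((real A)\<^sup>2 - 1))"
  have D3: "(\<lambda>w. D3 (\<lambda>i. real i * \<Delta>) (\<lambda>i. a * (real i * \<Delta>) + b + e i w) l A) =
      (\<lambda>w. K * (\<Sum>j\<in>{1..n}. D3_weight A l j * e j w))" if "A \<le> l" "l + A \<le> n" for l
    unfolding K_def using D3_arithmetic_grid[OF assms(4,5) that] by simp
  have "cov M (\<lambda>w. \<Sum>j\<in>{1..n}. D3_weight A k j * e j w) (\<lambda>w. \<Sum>j\<in>{1..n}. D3_weight A k' j * e j w) =
      \<sigma>\<^sup>2 * (\<Sum>j\<in>{1..n}. D3_weight A k j * D3_weight A k' j)"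
    using normal_distributed_moments[OF \<open>\<sigma> > 0\<close> assms(2)] indep_normal_products[OF assms(1-3)]
    by (intro cov_linear_combinations) auto
  then show ?thesis
    unfolding D3[OF assms(6,7)] D3[OF assms(8,9)] cov_mult K_def[symmetric] by (simp add: power2_eq_square)
qed

end

theorem lemma4:
  fixes M :: "'a measure" and e :: "nat \<Rightarrow> 'a \<Rightarrow> real"
    and n A k1 k2 :: nat and \<Delta> a b \<sigma> :: real
  assumes "prob_space M"
    and "prob_space.indep_vars M (\<lambda>_. borel) e {1..n}"
    and "\<And>i. i \<in> {1..n} \<Longrightarrow> distributed M lborel (e i) (normal_density 0 \<sigma>)"
    and "\<sigma> > 0" and "\<Delta> > 0" and "A \<ge> 2"
    and "A \<le> k1" and "k1 \<le> n - A" and "A \<le> k2" and "k2 \<le> n - A"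
  defines "X \<equiv> (\<lambda>i::nat. real i * \<Delta>)"
    and "Y \<equiv> (\<lambda>w (i::nat). a * (real i * \<Delta>) + b + e i w)"
    and "p \<equiv> \<bar>real k2 - real k1\<bar>"
  shows "cov M (D3_std M X Y k1 A) (D3_std M X Y k2 A) =
           6 / (real A * ((real A)\<^sup>2 - 1)) *
           (if p < real A then f1 p (real A)
            else if p \<le> 2 * real A - 1 then f2 p (real A)
            else 0)"
proof -
  interpret prob_space M by fact
  define K where "K = 12 / (\<Delta> * real A * ((real A)\<^sup>2 - 1))"
  define S where "S k k' = (\<Sum>j\<in>{1..n}. D3_weight A k j * D3_weight A k' j)" for k k'
  define c where "c = real A * ((real A)\<^sup>2 - 1) / 6"
  have windows: "k1 + A \<le> n" "k2 + A \<le> n"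
    using assms(6-10) by auto
  have cov_D3: "cov M (\<lambda>w. D3 X (Y w) k A) (\<lambda>w. D3 X (Y w) k' A) = K\<^sup>2 * \<sigma>\<^sup>2 * S k k'"
    if "k \<in> {k1, k2}" "k' \<in> {k1, k2}" for k k'
    unfolding X_def Y_def K_def S_def
    by (rule cov_D3_arithmetic_grid) (use that assms(2-10) windows in auto)
  have S_diagonal: "S k k = c" if "k \<in> {k1, k2}" for k
    using sum_D3_weight_products[of A k k n] that assms(6,7,9) windows
    by (auto simp: S_def c_def f1_def field_simps)
  have "K \<noteq> 0" "c > 0"
    using assms(5,6) mult_mono[of 2 "real A" 2 "real A"] by (auto simp: K_def c_def power2_eq_square)
  have "cov M (D3_std M X Y k1 A) (D3_std M X Y k2 A) =
      cov M (\<lambda>w. D3 X (Y w) k1 A) (\<lambda>w. D3 X (Y w) k2 A) /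
      sqrt (var M (\<lambda>w. D3 X (Y w) k1 A) * var M (\<lambda>w. D3 X (Y w) k2 A))"
    unfolding D3_std_def[abs_def] by (rule cov_standardized)
  also have "\<dots> = K\<^sup>2 * \<sigma>\<^sup>2 * S k1 k2 / sqrt ((K\<^sup>2 * \<sigma>\<^sup>2 * c) * (K\<^sup>2 * \<sigma>\<^sup>2 * c))"
    by (simp add: var_eq_cov cov_D3 S_diagonal)
  also have "\<dots> = S k1 k2 / c"
    using \<open>K \<noteq> 0\<close> \<open>c > 0\<close> \<open>\<sigma> > 0\<close> by (simp add: real_sqrt_mult_self)
  finally show ?thesis
    using sum_D3_weight_products[of A k1 k2 n] assms(7,9) windows by (simp add: S_def c_def p_def)
qed

end
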